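(* Let $w\ge 4$ and $u=w-2$. Then $$\sum_{\substack{a+b+c=w\\ a\ge2,\ b,c\ge1}} T(a,b,c)=\frac23T(2)T(u)-2T(u,2)+4\Big(\zeta(u,\bar1,1)-\zeta(\bar u,1,1)+\zeta(\bar u,1,\bar1)-\zeta(u,\bar1,\bar1)\Big).$$
   Context: Multiple $T$-values: for positive integers $s_1,\dots,s_d$ with $s_1>1$, $T(s_1,\dots,s_d)=\sum_{m_1>\dots>m_d>0,\ m_j\equiv d-j+1\ (\mathrm{mod}\ 2)}\frac{2^d}{m_1^{s_1}\cdots m_d^{s_d}}$. Euler sums: $\zeta(s_1,\dots,s_d;z_1,\dots,z_d)=\sum_{n_1>\dots>n_d>0}\frac{z_1^{n_1}\cdots z_d^{n_d}}{n_1^{s_1}\cdots n_d^{s_d}}$, $z_j\in\{\pm1\}$; a bar over the $j$-th argument means $z_j=-1$, no bar means $z_j=1$. *)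

theory Defs
  imports "HOL-Analysis.Analysis"
begin

text \<open>Multiple T-value T(s_1,...,s_d), indices 0-based: the j-th (0-based) summation
  variable m!j satisfies m!j = d - j (mod 2), i.e. the paper's m_j = d-j+1 (mod 2) with
  1-based j.\<close>
definition Tval :: "nat list \<Rightarrow> real" where
  "Tval s = infsum (\<lambda>m. 2 ^ length s / (\<Prod>j<length s. real (m ! j) ^ (s ! j)))
     {m. length m = length s \<and> sorted_wrt (>) m \<and>
         (\<forall>j<length s. 0 < m ! j \<and> m ! j mod 2 = (length s - j) mod 2)}"

definition esum :: "nat list \<Rightarrow> real list \<Rightarrow> real" where
  "esum s z = infsum (\<lambda>n. \<Prod>j<length s. (z ! j) ^ (n ! j) / real (n ! j) ^ (s ! j))
     {n. length n = length s \<and> sorted_wrt (>) n \<and> (\<forall>j<length s. 0 < n ! j)}"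

end

(*
  Write m1 = 2i + 1 > m2 = 2j > m3 = 2k + 1, so that T(a, b, c) / 8 is the sum of
  1 / (p^a q^b r^c) with p = 2i + 1, q = 2j, r = 2k + 1 over k < j <= i.  For fixed (i, j, k)
  the sum over all admissible (a, b, c) of weight w = u + 2 is x^2 y z h(x, y, z) at
  x = 1/p, y = 1/q, z = 1/r, where h is a complete homogeneous symmetric polynomial; its
  partial fraction expansion has one term for each of p, q, r, and each term is summed over
  (i, j, k) by telescoping:
  - the p-term gives T(u, 1, 1) / 8 after the substitution (i, j, k) -> (i, i - k, i - j);
  - the q-term gives the sum of O_j^2 / (2j)^u with O_j = 1 + 1/3 + ... + 1/(2j - 1), and
    expanding O_j^2 gives T(u, 2) / 4 plus twice an even-odd-odd triple sum S;
  - the r-term gives T(u, 1, 1) / 8 plus (pi^2/24) T(u) / 2, where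
    pi^2/24 = sum over odd k of (1/k) sum_{s > k} (-1)^s / s is evaluated by comparing the
    square of the alternating harmonic series with its Cauchy square.
  Splitting the four Euler sums according to the parities of their summation indices leaves
  4 (T(u, 1, 1) / 8 - S), and the identity follows.
*)
theory Submission
  imports Defs "HOL-Real_Asymp.Real_Asymp"
begin

section \<open>Infinite sums and harmonic numbers\<close>

lemma has_sum_diff:
  fixes f g :: "'a \<Rightarrow> 'b::topological_ab_group_add"
  assumes "(f has_sum a) A" and "(g has_sum b) A"
  shows "((\<lambda>x. f x - g x) has_sum (a - b)) A"
proof -
  have "((\<lambda>x. - g x) has_sum (- b)) A"
    using assms(2) by (simp add: has_sum_uminus)
  from has_sum_add[OF assms(1) this] show ?thesis by simp
qed

lemma has_sum_sum:
  fixes f :: "'i \<Rightarrow> 'a \<Rightarrow> 'b::topological_comm_monoid_add"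
  assumes "finite I" and "\<And>l. l \<in> I \<Longrightarrow> (f l has_sum s l) A"
  shows "((\<lambda>x. \<Sum>l\<in>I. f l x) has_sum (\<Sum>l\<in>I. s l)) A"
  using assms by (induction I rule: finite_induct) (auto intro: has_sum_add)

lemma has_sum_Sigma_nonneg:
  fixes f :: "'a \<times> 'b \<Rightarrow> real"
  assumes "\<And>x. x \<in> A \<Longrightarrow> ((\<lambda>y. f (x, y)) has_sum g x) (B x)"
    and "(g has_sum S) A"
    and "\<And>x y. x \<in> A \<Longrightarrow> y \<in> B x \<Longrightarrow> 0 \<le> f (x, y)"
  shows "(f has_sum S) (Sigma A B)"
proof (rule has_sum_SigmaI[OF assms(1,2)])
  show "f summable_on Sigma A B"
    by (rule summable_on_SigmaI[OF assms(1)]) (use assms(2,3) in \<open>auto simp: summable_on_def\<close>)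
qed

lemma has_sum_telescope:
  fixes g :: "nat \<Rightarrow> real"
  assumes "g \<longlonglongrightarrow> 0" and "\<And>n. g (n + m) \<le> g n"
  shows "((\<lambda>n. g n - g (n + m)) has_sum (\<Sum>i<m. g i)) UNIV"
proof -
  have "(\<lambda>n. g (n + i) - g (Suc n + i)) sums g i" for i
    using telescope_sums'[OF LIMSEQ_ignore_initial_segment[OF assms(1), of i]] by simp
  then have "(\<lambda>n. \<Sum>i<m. g (n + i) - g (Suc n + i)) sums (\<Sum>i<m. g i)"
    by (rule sums_sum)
  moreover have "(\<Sum>i<m. g (n + i) - g (Suc n + i)) = g n - g (n + m)" for n
    using sum_lessThan_telescope'[of "\<lambda>i. g (n + i)" m] by simp
  ultimately show ?thesis
    using assms(2) by (intro sums_nonneg_imp_has_sum) auto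
qed

lemma harm_le_ln_Suc: "harm n \<le> ln (real n + 1) + 1"
proof (cases "n = 0")
  case False
  then have "harm n - ln (real n) \<le> harm 1 - ln (real 1)"
    by (intro euler_mascheroni_sequence_decreasing) auto
  moreover have "ln (real n) \<le> ln (real n + 1)" using False by simp
  ultimately show ?thesis by (simp add: harm_def)
qed (simp add: harm_def)

lemma summable_on_harm_sq_bound:
  fixes f :: "nat \<Rightarrow> real"
  assumes "\<And>j. 0 \<le> f j" and "\<And>j. f j \<le> c * (1 + harm j ^ 2) / (real j + 1) ^ 2"
  shows "f summable_on UNIV"
proof -
  have "(\<lambda>j. (1 + harm j ^ 2) / (real j + 1) ^ 2) \<in> O(\<lambda>j. (1 + (ln (real j + 1) + 1) ^ 2) / (real j + 1) ^ 2)"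
    by (intro bigoI[of _ 1] always_eventually allI)
       (auto intro!: divide_right_mono power_mono harm_le_ln_Suc harm_nonneg)
  also have "(\<lambda>j. (1 + (ln (real j + 1) + 1) ^ 2) / (real j + 1) ^ 2) \<in> O(\<lambda>j. real j powr (-3/2))"
    by real_asymp
  finally have "summable (\<lambda>j. (1 + harm j ^ 2) / (real j + 1) ^ 2)"
    by (rule summable_comparison_test_bigo[rotated]) (simp add: summable_real_powr_iff)
  then have "summable (\<lambda>j. c * ((1 + harm j ^ 2) / (real j + 1) ^ 2))"
    by (rule summable_mult)
  then have "summable f"
    by (rule summable_comparison_test[rotated]) (use assms in auto)
  then show ?thesis
    using assms(1) by (simp add: summable_on_UNIV_nonneg_real_iff)
qed

lemma alternating_partial_sum_bounds:
  fixes c :: "nat \<Rightarrow> real"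
  assumes "\<And>i. c (Suc i) \<le> c i" and "\<And>i. 0 \<le> c i"
  shows "0 \<le> (\<Sum>i<n. (-1) ^ i * c i) \<and> (\<Sum>i<n. (-1) ^ i * c i) \<le> c 0 \<and>
         (even n \<longrightarrow> (\<Sum>i<n. (-1) ^ i * c i) + c n \<le> c 0) \<and>
         (odd n \<longrightarrow> 0 \<le> (\<Sum>i<n. (-1) ^ i * c i) - c n)"
proof (induction n)
  case (Suc n)
  then show ?case using assms[of n] by (cases "even n") auto
qed (use assms in simp)

section \<open>Odd harmonic numbers\<close>

definition odd_num :: "nat \<Rightarrow> real" where "odd_num i = 2 * real i + 1"

definition even_num :: "nat \<Rightarrow> real" where "even_num j = 2 * real j"

lemma odd_num_pos [simp]: "0 < odd_num i"
  by (simp add: odd_num_def)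

lemma odd_num_nonneg [simp]: "0 \<le> odd_num i"
  by (simp add: odd_num_def)

lemma even_num_nonneg [simp]: "0 \<le> even_num j"
  by (simp add: even_num_def)

definition odd_harm :: "nat \<Rightarrow> real" where "odd_harm n = (\<Sum>i<n. 1 / odd_num i)"

lemma odd_harm_0 [simp]: "odd_harm 0 = 0"
  by (simp add: odd_harm_def)

lemma odd_harm_Suc: "odd_harm (Suc n) = odd_harm n + 1 / odd_num n"
  by (simp add: odd_harm_def)

lemma odd_harm_nonneg: "0 \<le> odd_harm n"
  unfolding odd_harm_def by (intro sum_nonneg) (simp add: odd_num_def)

lemma odd_harm_mono: "m \<le> n \<Longrightarrow> odd_harm m \<le> odd_harm n"
  unfolding odd_harm_def by (intro sum_mono2) (auto simp: odd_num_def)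

lemma odd_harm_le_harm: "odd_harm n \<le> harm n"
  unfolding odd_harm_def harm_altdef
  by (intro sum_mono) (auto simp: odd_num_def inverse_eq_divide frac_le)

lemma sum_inverse_even_minus_odd: "(\<Sum>k<j. 1 / (even_num j - odd_num k)) = odd_harm j"
proof -
  have "(\<Sum>k<j. 1 / (even_num j - odd_num k)) = (\<Sum>k<j. 1 / odd_num (j - Suc k))"
    by (intro sum.cong refl) (auto simp: odd_num_def even_num_def of_nat_diff)
  also have "\<dots> = odd_harm j"
    unfolding odd_harm_def by (rule sum.nat_diff_reindex)
  finally show ?thesis .
qed

lemma has_sum_inverse_odd_num_mult:
  assumes "l \<ge> 1"
  shows "((\<lambda>n. 1 / (odd_num n * odd_num (n + l))) has_sum (odd_harm l / even_num l)) UNIV"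
proof -
  have "((\<lambda>n. 1 / odd_num n - 1 / odd_num (n + l)) has_sum (\<Sum>i<l. 1 / odd_num i)) UNIV"
  proof (rule has_sum_telescope)
    show "(\<lambda>n. 1 / odd_num n) \<longlonglongrightarrow> 0"
      unfolding odd_num_def by real_asymp
  qed (auto simp: odd_num_def intro!: divide_left_mono)
  from has_sum_cmult_right[OF this, of "1 / even_num l"]
  show ?thesis
    using assms by (simp add: odd_harm_def odd_num_def even_num_def field_simps)
qed

lemma has_sum_odd_num_telescope:
  "((\<lambda>n. 1 / odd_num (m + n + 1) - 1 / odd_num (m + n + 1 + k)) has_sum
      (\<Sum>l\<in>{1..k}. 1 / odd_num (m + l))) UNIV"
proof -
  have "((\<lambda>n. 1 / odd_num (m + n + 1) - 1 / odd_num (m + (n + k) + 1)) has_sum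
          (\<Sum>i<k. 1 / odd_num (m + i + 1))) UNIV"
  proof (rule has_sum_telescope)
    show "(\<lambda>n. 1 / odd_num (m + n + 1)) \<longlonglongrightarrow> 0"
      unfolding odd_num_def by real_asymp
  qed (auto simp: odd_num_def intro!: divide_left_mono)
  moreover have "(\<Sum>l\<in>{1..k}. 1 / odd_num (m + l)) = (\<Sum>i<k. 1 / odd_num (m + i + 1))"
    using sum.atLeast1_atMost_eq[of "\<lambda>l. 1 / odd_num (m + l)" k] by simp
  ultimately show ?thesis by (simp add: add_ac)
qed

definition harm_even_odd :: "nat \<Rightarrow> real" where
  "harm_even_odd i = (\<Sum>j\<in>{1..i}. odd_harm j / even_num j)"

lemma harm_even_odd_nonneg: "0 \<le> harm_even_odd i"
  unfolding harm_even_odd_def by (intro sum_nonneg divide_nonneg_nonneg odd_harm_nonneg) simp_all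

lemma harm_even_odd_le_harm_sq: "harm_even_odd i \<le> harm i ^ 2"
proof -
  have "harm_even_odd i \<le> (\<Sum>j\<in>{1..i}. harm i * (1 / real j))"
    unfolding harm_even_odd_def
  proof (intro sum_mono)
    fix j assume j: "j \<in> {1..i}"
    then have "odd_harm j \<le> harm i"
      using odd_harm_mono[of j i] odd_harm_le_harm[of i] by auto
    moreover have "1 / even_num j \<le> 1 / real j"
      using j by (simp add: even_num_def frac_le)
    ultimately have "odd_harm j * (1 / even_num j) \<le> harm i * (1 / real j)"
      using harm_nonneg[of i] odd_harm_nonneg[of j] by (intro mult_mono) auto
    then show "odd_harm j / even_num j \<le> harm i * (1 / real j)"
      by simp
  qed
  also have "\<dots> = harm i ^ 2"
    by (simp add: harm_def power2_eq_square sum_distrib_left inverse_eq_divide)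
  finally show ?thesis .
qed

lemma sum_pairs_eq_harm_even_odd:
  "(\<Sum>(j, k)\<in>{(j, k). k < j \<and> j \<le> i}. 1 / (even_num j * odd_num k)) = harm_even_odd i"
proof -
  have "{(j, k). k < j \<and> j \<le> i} = Sigma {1..i} (\<lambda>j. {..<j})" by auto
  then have "(\<Sum>(j, k)\<in>{(j, k). k < j \<and> j \<le> i}. 1 / (even_num j * odd_num k))
             = (\<Sum>j\<in>{1..i}. \<Sum>k<j. 1 / (even_num j * odd_num k))"
    by (simp add: sum.Sigma)
  also have "\<dots> = harm_even_odd i"
    by (simp add: harm_even_odd_def odd_harm_def sum_divide_distrib mult.commute)
  finally show ?thesis .
qed

section \<open>The constant \<open>\<pi>\<^sup>2/24\<close>\<close>

definition alt_term :: "nat \<Rightarrow> real" where "alt_term t = (-1) ^ Suc t / real (Suc t)"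

definition alt_harm :: "nat \<Rightarrow> real" where "alt_harm n = (\<Sum>t<n. alt_term t)"

definition alt_harm_cauchy :: "nat \<Rightarrow> real" where
  "alt_harm_cauchy n = (\<Sum>a<n. alt_term a * alt_harm (n - Suc a))"

lemma alt_harm_Suc: "alt_harm (Suc n) = alt_harm n + alt_term n"
  by (simp add: alt_harm_def)

lemma alt_harm_sq:
  "alt_harm n ^ 2 = 2 * (\<Sum>m<n. alt_term m * alt_harm m) + (\<Sum>t<n. 1 / real (Suc t) ^ 2)"
proof (induction n)
  case (Suc n)
  have "alt_term n ^ 2 = 1 / real (Suc n) ^ 2"
    by (simp add: alt_term_def power_divide flip: power_mult)
  with Suc show ?case
    unfolding alt_harm_Suc power2_sum by (simp add: algebra_simps)
qed (simp add: alt_harm_def)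

lemma sum_inverse_mult_complement:
  "(\<Sum>a<n. 1 / (real (Suc a) * real (n - a))) = 2 * harm n / real (Suc n)"
proof -
  have "(\<Sum>a<n. 1 / (real (Suc a) * real (n - a))) =
        (\<Sum>a<n. (1 / real (Suc a) + 1 / real (n - a)) / real (Suc n))"
  proof (intro sum.cong refl)
    fix a assume "a \<in> {..<n}"
    then have "real (n - a) > 0" and split: "real (Suc n) = real (Suc a) + real (n - a)"
      by auto
    moreover have "1 / (x * y) = (1 / x + 1 / y) / (x + y)" if "x > 0" "y > 0" for x y :: real
      using that by (simp add: divide_simps)
    ultimately show "1 / (real (Suc a) * real (n - a)) = (1 / real (Suc a) + 1 / real (n - a)) / real (Suc n)"
      unfolding split by (metis of_nat_0_less_iff zero_less_Suc)
  qed
  also have "\<dots> = ((\<Sum>a<n. 1 / real (Suc a)) + (\<Sum>a<n. 1 / real (n - a))) / real (Suc n)"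
    by (simp only: sum.distrib[symmetric] sum_divide_distrib)
  also have "(\<Sum>a<n. 1 / real (n - a)) = (\<Sum>a<n. 1 / real (Suc a))"
    using sum.nat_diff_reindex[of "\<lambda>a. 1 / real (Suc a)" n] by (simp del: of_nat_diff add: Suc_diff_Suc)
  finally show ?thesis by (simp add: harm_altdef inverse_eq_divide)
qed

lemma alt_harm_cauchy_eq: "alt_harm_cauchy n = 2 * (\<Sum>m<n. alt_term m * harm m)"
proof (induction n)
  case (Suc n)
  have "alt_harm_cauchy (Suc n) = (\<Sum>a<n. alt_term a * alt_harm (n - a))"
    by (simp add: alt_harm_cauchy_def alt_harm_def)
  also have "\<dots> = (\<Sum>a<n. alt_term a * alt_harm (n - Suc a)
                 + (-1) ^ Suc n * (1 / (real (Suc a) * real (n - a))))"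
  proof (intro sum.cong refl)
    fix a assume a: "a \<in> {..<n}"
    then have "alt_harm (n - a) = alt_harm (n - Suc a) + alt_term (n - Suc a)"
      using alt_harm_Suc[of "n - Suc a"] by (simp add: Suc_diff_Suc)
    moreover have "alt_term a * alt_term (n - Suc a) = (-1) ^ Suc n * (1 / (real (Suc a) * real (n - a)))"
      using a by (simp add: alt_term_def Suc_diff_Suc flip: power_add)
    ultimately show "alt_term a * alt_harm (n - a) =
        alt_term a * alt_harm (n - Suc a) + (-1) ^ Suc n * (1 / (real (Suc a) * real (n - a)))"
      by (simp add: distrib_left)
  qed
  also have "\<dots> = alt_harm_cauchy n + (-1) ^ Suc n * (\<Sum>a<n. 1 / (real (Suc a) * real (n - a)))"
    by (simp only: sum.distrib alt_harm_cauchy_def sum_distrib_left)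
  also have "\<dots> = alt_harm_cauchy n + (-1) ^ Suc n * (2 * harm n / real (Suc n))"
    by (simp only: sum_inverse_mult_complement)
  finally show ?case using Suc by (simp add: alt_term_def field_simps)
qed (simp add: alt_harm_cauchy_def)

lemma odd_harm_Suc_half: "odd_harm (Suc n div 2) = (harm n - alt_harm n) / 2"
proof (induction n)
  case (Suc n)
  define x where "x = 1 / real (Suc n)"
  have harm: "harm (Suc n) = harm n + x"
    by (simp add: harm_Suc x_def inverse_eq_divide)
  show ?case
  proof (cases "even n")
    case True
    then have "Suc (Suc n) div 2 = Suc (Suc n div 2)" and "odd_num (Suc n div 2) = real (Suc n)"
      by (auto simp: odd_num_def elim!: evenE)
    then have "odd_harm (Suc (Suc n) div 2) = odd_harm (Suc n div 2) + x"
      by (simp add: odd_harm_Suc x_def)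
    moreover have alt: "alt_harm (Suc n) = alt_harm n - x"
      using True by (simp add: alt_harm_Suc alt_term_def x_def)
    ultimately have "odd_harm (Suc (Suc n) div 2) = (harm n - alt_harm n) / 2 + x"
      using Suc.IH by simp
    also have "\<dots> = (harm (Suc n) - alt_harm (Suc n)) / 2"
      using harm alt by simp
    finally show ?thesis .
  next
    case False
    then have "Suc (Suc n) div 2 = Suc n div 2" by presburger
    moreover have "alt_harm (Suc n) = alt_harm n + x"
      using False by (simp add: alt_harm_Suc alt_term_def x_def)
    ultimately show ?thesis using Suc.IH harm by simp
  qed
qed (simp add: alt_harm_def harm_def)

lemma alt_harm_shift_bound: "\<bar>alt_harm (s + n) - alt_harm s\<bar> \<le> 1 / real (Suc s)"
proof -
  let ?c = "\<lambda>i. 1 / real (Suc (s + i))"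
  have "alt_harm (s + n) - alt_harm s = (-1) ^ Suc s * (\<Sum>i<n. (-1) ^ i * ?c i)"
    by (induction n) (simp_all add: alt_harm_def alt_term_def power_add algebra_simps)
  moreover have "0 \<le> (\<Sum>i<n. (-1) ^ i * ?c i) \<and> (\<Sum>i<n. (-1) ^ i * ?c i) \<le> ?c 0"
    using alternating_partial_sum_bounds[of ?c n] by (auto simp: frac_le)
  ultimately show ?thesis by (simp add: abs_mult)
qed

lemma alt_harm_sq_minus_cauchy_bound:
  "\<bar>alt_harm n ^ 2 - alt_harm_cauchy n\<bar> \<le> 2 * harm n / real (Suc n)"
proof -
  have "alt_harm n ^ 2 = (\<Sum>a<n. alt_term a * alt_harm n)"
    by (simp add: power2_eq_square alt_harm_def[of n] sum_distrib_right)
  then have "alt_harm n ^ 2 - alt_harm_cauchy n = (\<Sum>a<n. alt_term a * (alt_harm n - alt_harm (n - Suc a)))"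
    by (simp only: alt_harm_cauchy_def right_diff_distrib sum_subtractf)
  also have "\<bar>\<dots>\<bar> \<le> (\<Sum>a<n. 1 / (real (Suc a) * real (n - a)))"
  proof (rule order_trans[OF sum_abs sum_mono])
    fix a assume a: "a \<in> {..<n}"
    have shift: "\<bar>alt_harm n - alt_harm (n - Suc a)\<bar> \<le> 1 / real (n - a)"
      using alt_harm_shift_bound[of "n - Suc a" "Suc a"] a by (simp add: Suc_diff_Suc)
    have "\<bar>alt_term a * (alt_harm n - alt_harm (n - Suc a))\<bar>
          = \<bar>alt_harm n - alt_harm (n - Suc a)\<bar> / real (Suc a)"
      by (simp add: alt_term_def abs_mult)
    also have "\<dots> \<le> 1 / real (n - a) / real (Suc a)"
      using shift by (rule divide_right_mono) simp
    finally show "\<bar>alt_term a * (alt_harm n - alt_harm (n - Suc a))\<bar>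
                  \<le> 1 / (real (Suc a) * real (n - a))"
      by (simp add: mult.commute)
  qed
  finally show ?thesis by (simp only: sum_inverse_mult_complement)
qed

lemma alt_harm_sq_minus_cauchy_tendsto: "(\<lambda>n. alt_harm n ^ 2 - alt_harm_cauchy n) \<longlonglongrightarrow> 0"
proof (rule Lim_null_comparison)
  show "(\<lambda>n. 2 * (ln (real n + 1) + 1) / real (Suc n)) \<longlonglongrightarrow> 0"
    by real_asymp
  show "\<forall>\<^sub>F n in sequentially.
          norm (alt_harm n ^ 2 - alt_harm_cauchy n) \<le> 2 * (ln (real n + 1) + 1) / real (Suc n)"
  proof (intro always_eventually allI)
    fix n
    have "norm (alt_harm n ^ 2 - alt_harm_cauchy n) \<le> 2 * harm n / real (Suc n)"
      using alt_harm_sq_minus_cauchy_bound by simp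
    also have "\<dots> \<le> 2 * (ln (real n + 1) + 1) / real (Suc n)"
      by (intro divide_right_mono mult_left_mono harm_le_ln_Suc) auto
    finally show "norm (alt_harm n ^ 2 - alt_harm_cauchy n)
                  \<le> 2 * (ln (real n + 1) + 1) / real (Suc n)" .
  qed
qed

lemma sum_alt_term_odd_harm_tendsto:
  "(\<lambda>n. \<Sum>m<n. alt_term m * odd_harm (Suc m div 2)) \<longlonglongrightarrow> pi\<^sup>2 / 24"
proof -
  have partial: "(\<Sum>m<n. alt_term m * odd_harm (Suc m div 2)) =
      ((\<Sum>t<n. 1 / real (Suc t) ^ 2) - (alt_harm n ^ 2 - alt_harm_cauchy n)) / 4" for n
  proof -
    have "(\<Sum>m<n. alt_term m * odd_harm (Suc m div 2)) =
          (\<Sum>m<n. alt_term m * harm m) / 2 - (\<Sum>m<n. alt_term m * alt_harm m) / 2"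
      unfolding odd_harm_Suc_half
      by (simp add: sum_divide_distrib sum_subtractf right_diff_distrib diff_divide_distrib)
    then show ?thesis
      using alt_harm_sq[of n] alt_harm_cauchy_eq[of n] by simp
  qed
  have "(\<lambda>n. \<Sum>t<n. 1 / real (Suc t) ^ 2) \<longlonglongrightarrow> pi\<^sup>2 / 6"
    using inverse_squares_sums unfolding sums_def by (simp add: add.commute)
  then have "(\<lambda>n. ((\<Sum>t<n. 1 / real (Suc t) ^ 2) - (alt_harm n ^ 2 - alt_harm_cauchy n)) / 4)
      \<longlonglongrightarrow> (pi\<^sup>2 / 6 - 0) / 4"
    by (intro tendsto_divide tendsto_diff alt_harm_sq_minus_cauchy_tendsto) auto
  then show ?thesis unfolding partial by simp
qed

lemma has_sum_odd_harm_alternating: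
  "((\<lambda>N. odd_harm N * (1 / even_num N - 1 / odd_num N)) has_sum (pi\<^sup>2 / 24)) UNIV"
proof -
  let ?a = "\<lambda>N. odd_harm N * (1 / even_num N - 1 / odd_num N)"
  have partial: "(\<Sum>N<Suc K. ?a N) = (\<Sum>m<2 * K + 1. alt_term m * odd_harm (Suc m div 2))" for K
  proof (induction K)
    case (Suc K)
    have "Suc (2 * K + 1) div 2 = Suc K" "Suc (2 * K + 2) div 2 = Suc K" by presburger+
    with Suc show ?case by (simp add: alt_term_def odd_num_def even_num_def algebra_simps)
  qed simp
  have "filterlim (\<lambda>K::nat. 2 * K + 1) sequentially sequentially" by real_asymp
  from filterlim_compose[OF sum_alt_term_odd_harm_tendsto this]
  have "(\<lambda>K. \<Sum>N<Suc K. ?a N) \<longlonglongrightarrow> pi\<^sup>2 / 24" unfolding partial by simp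
  then have "?a sums (pi\<^sup>2 / 24)"
    unfolding sums_def by (rule filterlim_sequentially_Suc[THEN iffD1])
  moreover have "0 \<le> ?a N" for N
    using odd_harm_nonneg[of N]
    by (cases "N = 0") (auto intro!: mult_nonneg_nonneg simp: odd_num_def even_num_def frac_le)
  ultimately show ?thesis by (intro sums_nonneg_imp_has_sum) auto
qed

lemma has_sum_pi_sq_div_24:
  "((\<lambda>(m, n). 1 / odd_num m * (1 / even_num (m + n + 1) - 1 / odd_num (m + n + 1))) has_sum (pi\<^sup>2 / 24)) UNIV"
proof -
  let ?h = "\<lambda>(N, m). 1 / odd_num m * (1 / even_num N - 1 / odd_num N)"
  have "(?h has_sum (pi\<^sup>2 / 24)) (Sigma UNIV (\<lambda>N. {..<N}))"
  proof (rule has_sum_Sigma_nonneg[OF _ has_sum_odd_harm_alternating])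
    show "((\<lambda>m. ?h (N, m)) has_sum (odd_harm N * (1 / even_num N - 1 / odd_num N))) {..<N}" for N
      by (rule has_sum_finiteI) (simp_all add: odd_harm_def sum_distrib_right)
    show "0 \<le> ?h (N, m)" if "m \<in> {..<N}" for N m
    proof -
      have "1 / odd_num N \<le> 1 / even_num N"
        using that by (auto simp: odd_num_def even_num_def intro!: divide_left_mono)
      then show ?thesis by simp
    qed
  qed
  then show ?thesis
    by (rule has_sum_reindex_bij_witness[of _ "\<lambda>(N, m). (m, N - m - 1)" "\<lambda>(m, n). (m + n + 1, m)",
          THEN iffD2, rotated -1]) auto
qed

section \<open>Sums over odd-even-odd triples\<close>

text \<open>The summation range \<open>m\<^sub>1 > m\<^sub>2 > m\<^sub>3 > 0\<close> of \<open>T(a, b, c)\<close>, with \<open>m\<^sub>1\<close> and \<open>m\<^sub>3\<close> odd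
  and \<open>m\<^sub>2\<close> even, parametrised as \<open>(2i + 1, 2j, 2k + 1)\<close>.\<close>

definition oeo_triples :: "(nat \<times> nat \<times> nat) set" where
  "oeo_triples = {(i, j, k). k < j \<and> j \<le> i}"

definition T3_term :: "nat \<times> nat \<times> nat \<Rightarrow> nat \<times> nat \<times> nat \<Rightarrow> real" where
  "T3_term = (\<lambda>(a, b, c) (i, j, k). 1 / (odd_num i ^ a * even_num j ^ b * odd_num k ^ c))"

text \<open>For \<open>p = odd_num i > q = even_num j > r = odd_num k\<close> these are the three terms of the partial
  fraction expansion of the weight \<open>u + 2\<close> sum of \<open>1/(p\<^sup>a q\<^sup>b r\<^sup>c)\<close>
  (\<open>sum_T3_term_weight_indices\<close> below), each named after the position in \<open>p > q > r\<close> of the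
  variable carrying the power \<open>u\<close> or \<open>u - 1\<close>.\<close>

definition pf_top :: "nat \<Rightarrow> nat \<times> nat \<times> nat \<Rightarrow> real" where
  "pf_top u = (\<lambda>(i, j, k). 1 / (odd_num i ^ u * (odd_num i - even_num j) * (odd_num i - odd_num k)))"

definition pf_mid :: "nat \<Rightarrow> nat \<times> nat \<times> nat \<Rightarrow> real" where
  "pf_mid u = (\<lambda>(i, j, k).
     1 / (even_num j ^ (u - 1) * odd_num i * (odd_num i - even_num j) * (even_num j - odd_num k)))"

definition pf_low :: "nat \<Rightarrow> nat \<times> nat \<times> nat \<Rightarrow> real" where
  "pf_low u = (\<lambda>(i, j, k).
     1 / (odd_num k ^ (u - 1) * odd_num i * (odd_num i - odd_num k) * (even_num j - odd_num k)))"

lemma oeo_triples_less: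
  assumes "(i, j, k) \<in> oeo_triples"
  shows "odd_num k < even_num j" and "even_num j < odd_num i"
  using assms by (auto simp: oeo_triples_def odd_num_def even_num_def)

lemma T3_term_nonneg: "0 \<le> T3_term abc x"
  by (auto simp: T3_term_def case_prod_unfold intro!: mult_nonneg_nonneg)

lemma pf_mid_nonneg: "(i, j, k) \<in> oeo_triples \<Longrightarrow> 0 \<le> pf_mid u (i, j, k)"
  using oeo_triples_less[of i j k] by (auto simp: pf_mid_def intro!: mult_nonneg_nonneg)

lemma pf_low_nonneg: "(i, j, k) \<in> oeo_triples \<Longrightarrow> 0 \<le> pf_low u (i, j, k)"
  using oeo_triples_less[of i j k] by (auto simp: pf_low_def intro!: mult_nonneg_nonneg)

lemma odd_num_power_ge: "u \<ge> 2 \<Longrightarrow> (real j + 1) ^ 2 \<le> odd_num j ^ u"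
  by (rule order_trans[OF power_mono power_increasing]) (auto simp: odd_num_def)

lemma even_num_power_ge: "u \<ge> 2 \<Longrightarrow> j \<ge> 1 \<Longrightarrow> (real j + 1) ^ 2 \<le> even_num j ^ u"
  by (rule order_trans[OF power_mono power_increasing]) (auto simp: even_num_def)

lemma summable_on_inverse_odd_num_power:
  assumes "u \<ge> 2"
  shows "(\<lambda>k. 1 / odd_num k ^ u) summable_on UNIV"
proof (rule summable_on_harm_sq_bound)
  show "1 / odd_num k ^ u \<le> 1 * (1 + harm k ^ 2) / (real k + 1) ^ 2" for k
    using odd_num_power_ge[OF assms, of k] by (intro frac_le) auto
qed simp

lemma summable_on_harm_even_odd:
  assumes "u \<ge> 2"
  shows "(\<lambda>i. harm_even_odd i / odd_num i ^ u) summable_on UNIV"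
proof (rule summable_on_harm_sq_bound)
  show "harm_even_odd i / odd_num i ^ u \<le> 1 * (1 + harm i ^ 2) / (real i + 1) ^ 2" for i
    using harm_even_odd_le_harm_sq[of i] odd_num_power_ge[OF assms, of i] by (intro frac_le) auto
qed (simp add: harm_even_odd_nonneg)

lemma summable_on_odd_harm_sq:
  assumes "u \<ge> 2"
  shows "(\<lambda>j. odd_harm j ^ 2 / even_num j ^ u) summable_on UNIV"
proof (rule summable_on_harm_sq_bound)
  fix j
  show "odd_harm j ^ 2 / even_num j ^ u \<le> 1 * (1 + harm j ^ 2) / (real j + 1) ^ 2"
  proof (cases "j = 0")
    case False
    have "odd_harm j ^ 2 \<le> harm j ^ 2"
      by (rule power_mono[OF odd_harm_le_harm odd_harm_nonneg])
    then show ?thesis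
      using even_num_power_ge[OF assms, of j] False by (intro frac_le) auto
  qed simp
qed simp

lemma has_sum_T3_term_u11:
  assumes "u \<ge> 2"
  shows "(T3_term (u, 1, 1) has_sum (\<Sum>\<^sub>\<infinity>i. harm_even_odd i / odd_num i ^ u)) oeo_triples"
proof -
  let ?S = "\<lambda>i. {(j, k). k < j \<and> j \<le> i}"
  have "(T3_term (u, 1, 1) has_sum (\<Sum>\<^sub>\<infinity>i. harm_even_odd i / odd_num i ^ u)) (Sigma UNIV ?S)"
  proof (rule has_sum_Sigma_nonneg)
    fix i
    have "(\<Sum>y\<in>?S i. T3_term (u, 1, 1) (i, y))
          = (\<Sum>(j, k)\<in>?S i. 1 / odd_num i ^ u * (1 / (even_num j * odd_num k)))"
      by (intro sum.cong refl) (auto simp: T3_term_def)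
    also have "\<dots> = 1 / odd_num i ^ u * (\<Sum>(j, k)\<in>?S i. 1 / (even_num j * odd_num k))"
      by (simp add: sum_distrib_left case_prod_unfold)
    finally have "(\<Sum>y\<in>?S i. T3_term (u, 1, 1) (i, y)) = harm_even_odd i / odd_num i ^ u"
      by (simp add: sum_pairs_eq_harm_even_odd)
    moreover have "finite (?S i)"
      by (rule finite_subset[of _ "{..i} \<times> {..i}"]) auto
    ultimately show "((\<lambda>y. T3_term (u, 1, 1) (i, y)) has_sum (harm_even_odd i / odd_num i ^ u)) (?S i)"
      by (intro has_sum_finiteI) auto
  qed (use assms summable_on_harm_even_odd T3_term_nonneg in auto)
  moreover have "Sigma UNIV ?S = oeo_triples"
    by (auto simp: oeo_triples_def)
  ultimately show ?thesis by simp
qed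

lemma has_sum_pf_top:
  assumes "u \<ge> 2"
  shows "(pf_top u has_sum (\<Sum>\<^sub>\<infinity>i. harm_even_odd i / odd_num i ^ u)) oeo_triples"
proof -
  let ?\<sigma> = "\<lambda>(i, j, k). (i, i - k, i - j)"
  have "(pf_top u has_sum (\<Sum>\<^sub>\<infinity>i. harm_even_odd i / odd_num i ^ u)) oeo_triples
        \<longleftrightarrow> (T3_term (u, 1, 1) has_sum (\<Sum>\<^sub>\<infinity>i. harm_even_odd i / odd_num i ^ u)) oeo_triples"
  proof (rule has_sum_reindex_bij_witness[of _ ?\<sigma> ?\<sigma>])
    fix x assume "x \<in> oeo_triples"
    then obtain i j k where x: "x = (i, j, k)" "k < j" "j \<le> i" by (auto simp: oeo_triples_def)
    then have "odd_num i - odd_num k = even_num (i - k)" "odd_num i - even_num j = odd_num (i - j)"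
      by (auto simp: odd_num_def even_num_def of_nat_diff)
    with x show "T3_term (u, 1, 1) (?\<sigma> x) = pf_top u x"
      by (simp add: T3_term_def pf_top_def mult.assoc)
  qed (auto simp: oeo_triples_def)
  with has_sum_T3_term_u11[OF assms] show ?thesis by simp
qed

lemma has_sum_pf_mid_slice:
  assumes "u \<ge> 1"
  shows "((\<lambda>(i, k). pf_mid u (i, j, k)) has_sum (odd_harm j ^ 2 / even_num j ^ u)) ({j..} \<times> {..<j})"
proof (cases "j = 0")
  case False
  define c where "c = odd_harm j / even_num j ^ (u - 1)"
  have inner: "((\<lambda>k. pf_mid u (i, j, k)) has_sum (c / (odd_num i * (odd_num i - even_num j)))) {..<j}" for i
  proof (rule has_sum_finiteI)
    have "pf_mid u (i, j, k) = 1 / (even_num j ^ (u - 1) * odd_num i * (odd_num i - even_num j))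
                               * (1 / (even_num j - odd_num k))" for k
      by (simp add: pf_mid_def)
    then show "c / (odd_num i * (odd_num i - even_num j)) = (\<Sum>k<j. pf_mid u (i, j, k))"
      by (simp only: sum_distrib_left[symmetric] sum_inverse_even_minus_odd) (simp add: c_def)
  qed simp
  have total: "c * (odd_harm j / even_num j) = odd_harm j ^ 2 / even_num j ^ u"
    using assms by (simp add: c_def power2_eq_square power_eq_if[of _ u] mult.commute)
  have "((\<lambda>n. c * (1 / (odd_num n * odd_num (n + j)))) has_sum (c * (odd_harm j / even_num j))) UNIV"
    using False by (intro has_sum_cmult_right has_sum_inverse_odd_num_mult) simp
  then have outer: "((\<lambda>i. c / (odd_num i * (odd_num i - even_num j))) has_sum
                             (c * (odd_harm j / even_num j))) {j..}"
  proof (rule has_sum_reindex_bij_witness[of _ "\<lambda>n. j + n" "\<lambda>i. i - j", THEN iffD2, rotated -1])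
    fix i :: nat assume "i \<in> {j..}"
    then have "odd_num i - even_num j = odd_num (i - j)" "odd_num i = odd_num (i - j + j)"
      by (auto simp: odd_num_def even_num_def of_nat_diff)
    then show "c * (1 / (odd_num (i - j) * odd_num (i - j + j))) = c / (odd_num i * (odd_num i - even_num j))"
      by (simp add: mult.commute)
  qed auto
  have "((\<lambda>(i, k). pf_mid u (i, j, k)) has_sum (c * (odd_harm j / even_num j))) (Sigma {j..} (\<lambda>_. {..<j}))"
    by (rule has_sum_Sigma_nonneg[where g = "\<lambda>i. c / (odd_num i * (odd_num i - even_num j))"])
       (use inner outer pf_mid_nonneg in \<open>auto simp: oeo_triples_def\<close>)
  with total show ?thesis by simp
qed simp

lemma has_sum_pf_mid:
  assumes "u \<ge> 2"
  shows "(pf_mid u has_sum (\<Sum>\<^sub>\<infinity>j. odd_harm j ^ 2 / even_num j ^ u)) oeo_triples"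
proof -
  have "((\<lambda>(j, i, k). pf_mid u (i, j, k)) has_sum (\<Sum>\<^sub>\<infinity>j. odd_harm j ^ 2 / even_num j ^ u))
          (Sigma UNIV (\<lambda>j. {j..} \<times> {..<j}))"
  proof (rule has_sum_Sigma_nonneg)
    show "((\<lambda>y. (\<lambda>(j, i, k). pf_mid u (i, j, k)) (j, y)) has_sum (odd_harm j ^ 2 / even_num j ^ u))
            ({j..} \<times> {..<j})" for j
      using has_sum_pf_mid_slice[of u j] assms by simp
  qed (use assms summable_on_odd_harm_sq pf_mid_nonneg in \<open>auto simp: oeo_triples_def\<close>)
  then show ?thesis
    by (rule has_sum_reindex_bij_witness[of _ "\<lambda>(j, i, k). (i, j, k)" "\<lambda>(i, j, k). (j, i, k)",
          THEN iffD2, rotated -1])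
       (auto simp: oeo_triples_def)
qed

lemma has_sum_harm_even_odd:
  "((\<lambda>(m, n). 1 / odd_num m * (1 / odd_num (m + n + 1) - 1 / odd_num (m + n + 1 + k)))
      has_sum harm_even_odd k) UNIV"
proof -
  let ?f = "\<lambda>(m, n). 1 / odd_num m * (1 / odd_num (m + n + 1) - 1 / odd_num (m + n + 1 + k))"
  let ?g = "\<lambda>m. 1 / odd_num m * (\<Sum>l\<in>{1..k}. 1 / odd_num (m + l))"
  have "(?f has_sum harm_even_odd k) (Sigma UNIV (\<lambda>_. UNIV))"
  proof (rule has_sum_Sigma_nonneg[where g = ?g])
    show "((\<lambda>n. ?f (m, n)) has_sum ?g m) UNIV" for m
      using has_sum_cmult_right[OF has_sum_odd_num_telescope, of "1 / odd_num m" m k] by simp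
    have "((\<lambda>m. \<Sum>l\<in>{1..k}. 1 / (odd_num m * odd_num (m + l))) has_sum
            (\<Sum>l\<in>{1..k}. odd_harm l / even_num l)) UNIV"
      by (intro has_sum_sum has_sum_inverse_odd_num_mult) auto
    then show "(?g has_sum harm_even_odd k) UNIV"
      by (simp add: harm_even_odd_def sum_distrib_left)
    show "0 \<le> ?f (m, n)" for m n
    proof -
      have "1 / odd_num (m + n + 1 + k) \<le> 1 / odd_num (m + n + 1)"
        by (auto simp: odd_num_def intro!: divide_left_mono)
      then show ?thesis by simp
    qed
  qed
  then show ?thesis by simp
qed

text \<open>After the substitution \<open>i = k + 1 + m + n\<close>, \<open>j = k + 1 + m\<close> the term is
  \<open>1/(r\<^sup>u t) (1/s - 1/(s + r))\<close> with \<open>r = 2k + 1\<close>, \<open>s = 2(m + n + 1)\<close>, \<open>t = 2m + 1\<close>; splitting the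
  difference at \<open>1/(s + 1)\<close> gives the summands of \<open>has_sum_pi_sq_div_24\<close> and \<open>has_sum_harm_even_odd\<close>.\<close>

lemma pf_low_shift:
  assumes "u \<ge> 1"
  shows "pf_low u (k + 1 + m + n, k + 1 + m, k) = 1 / odd_num k ^ u *
      (1 / odd_num m * (1 / even_num (m + n + 1) - 1 / odd_num (m + n + 1))
       + 1 / odd_num m * (1 / odd_num (m + n + 1) - 1 / odd_num (m + n + 1 + k)))"
proof -
  define r where "r = odd_num k"
  define s where "s = even_num (m + n + 1)"
  define t where "t = odd_num m"
  have pos: "r > 0" "s > 0" "t > 0" "r ^ (u - 1) > 0"
    by (simp_all add: r_def s_def t_def even_num_def)
  have "odd_num (k + 1 + m + n) = r + s" "odd_num (k + 1 + m + n) - odd_num k = s"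
       "even_num (k + 1 + m) - odd_num k = t" "odd_num (m + n + 1 + k) = s + r"
    by (simp_all add: r_def s_def t_def odd_num_def even_num_def algebra_simps)
  then have "pf_low u (k + 1 + m + n, k + 1 + m, k) = 1 / (r ^ (u - 1) * (r + s) * s * t)"
    by (simp add: pf_low_def r_def)
  also have "\<dots> = 1 / (r ^ (u - 1) * r) * (1 / t * (1 / s - 1 / (s + r)))"
    using pos by (simp add: field_simps)
  also have "r ^ (u - 1) * r = r ^ u"
    using assms by (simp add: power_eq_if[of _ u] mult.commute)
  finally have "pf_low u (k + 1 + m + n, k + 1 + m, k) = 1 / r ^ u * (1 / t * (1 / s - 1 / (s + r)))" .
  then show ?thesis
    unfolding r_def[symmetric] s_def[symmetric] t_def[symmetric] \<open>odd_num (m + n + 1 + k) = s + r\<close>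
    by (simp add: algebra_simps)
qed

lemma has_sum_pf_low:
  assumes "u \<ge> 2"
  shows "(pf_low u has_sum (pi\<^sup>2 / 24 * (\<Sum>\<^sub>\<infinity>k. 1 / odd_num k ^ u) + (\<Sum>\<^sub>\<infinity>i. harm_even_odd i / odd_num i ^ u)))
           oeo_triples"
proof -
  define X where "X = (\<lambda>(m, n). 1 / odd_num m * (1 / even_num (m + n + 1) - 1 / odd_num (m + n + 1)))"
  define Y where
    "Y k = (\<lambda>(m, n). 1 / odd_num m * (1 / odd_num (m + n + 1) - 1 / odd_num (m + n + 1 + k)))" for k
  define h where "h = (\<lambda>(k, mn). 1 / odd_num k ^ u * (X mn + Y k mn))"
  have h_eq: "h (k, m, n) = pf_low u (k + 1 + m + n, k + 1 + m, k)" for k m n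
    using pf_low_shift assms by (simp add: h_def X_def Y_def)
  have slice: "((\<lambda>mn. h (k, mn)) has_sum (1 / odd_num k ^ u * (pi\<^sup>2 / 24 + harm_even_odd k))) UNIV" for k
    unfolding h_def X_def Y_def prod.case
    by (intro has_sum_cmult_right has_sum_add has_sum_pi_sq_div_24 has_sum_harm_even_odd)
  have "((\<lambda>k. pi\<^sup>2 / 24 * (1 / odd_num k ^ u) + harm_even_odd k / odd_num k ^ u) has_sum
          (pi\<^sup>2 / 24 * (\<Sum>\<^sub>\<infinity>k. 1 / odd_num k ^ u) + (\<Sum>\<^sub>\<infinity>i. harm_even_odd i / odd_num i ^ u))) UNIV"
    using assms
    by (intro has_sum_add has_sum_cmult_right has_sum_infsum summable_on_inverse_odd_num_power
          summable_on_harm_even_odd)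
  then have outer: "((\<lambda>k. 1 / odd_num k ^ u * (pi\<^sup>2 / 24 + harm_even_odd k)) has_sum
          (pi\<^sup>2 / 24 * (\<Sum>\<^sub>\<infinity>k. 1 / odd_num k ^ u) + (\<Sum>\<^sub>\<infinity>i. harm_even_odd i / odd_num i ^ u))) UNIV"
    by (simp add: algebra_simps)
  have "(h has_sum (pi\<^sup>2 / 24 * (\<Sum>\<^sub>\<infinity>k. 1 / odd_num k ^ u) + (\<Sum>\<^sub>\<infinity>i. harm_even_odd i / odd_num i ^ u)))
          (Sigma UNIV (\<lambda>_. UNIV))"
    by (rule has_sum_Sigma_nonneg[OF slice outer])
       (auto simp: h_eq oeo_triples_def intro!: pf_low_nonneg)
  then show ?thesis
  proof (rule has_sum_reindex_bij_witness[of _ "\<lambda>(k, m, n). (k + 1 + m + n, k + 1 + m, k)"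
            "\<lambda>(i, j, k). (k, j - k - 1, i - j)", THEN iffD2, rotated -1])
    fix x assume "x \<in> oeo_triples"
    then obtain i j k where x: "x = (i, j, k)" "k < j" "j \<le> i" by (auto simp: oeo_triples_def)
    then have "k + 1 + (j - k - 1) + (i - j) = i" "k + 1 + (j - k - 1) = j" by auto
    with x show "h ((\<lambda>(i, j, k). (k, j - k - 1, i - j)) x) = pf_low u x"
      by (simp add: h_eq)
  qed (auto simp: oeo_triples_def)
qed

section \<open>Partial fractions\<close>

definition weight_indices :: "nat \<Rightarrow> (nat \<times> nat \<times> nat) set" where
  "weight_indices w = {(a, b, c). a + b + c = w \<and> a \<ge> 2 \<and> b \<ge> 1 \<and> c \<ge> 1}"

lemma finite_weight_indices: "finite (weight_indices w)"
  by (rule finite_subset[of _ "{..w} \<times> {..w} \<times> {..w}"]) (auto simp: weight_indices_def)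

lemma sum_weight_indices:
  "(\<Sum>(a, b, c)\<in>weight_indices w. f a b c) = (\<Sum>a\<in>{2..<w}. \<Sum>b\<in>{1..<w - a}. f a b (w - a - b))"
proof -
  have "weight_indices w = (\<lambda>(a, b). (a, b, w - a - b)) ` (SIGMA a:{2..<w}. {1..<w - a})"
    by (auto simp: weight_indices_def image_iff)
  moreover have "inj_on (\<lambda>(a, b). (a, b, w - a - b)) (SIGMA a:{2..<w}. {1..<w - a})"
    by (auto simp: inj_on_def)
  ultimately show ?thesis
    by (simp add: sum.reindex sum.Sigma case_prod_unfold)
qed

lemma sum_power_mult_power_diff:
  fixes x y :: "'a::comm_ring_1"
  assumes "m \<le> n"
  shows "(x - y) * (\<Sum>a\<in>{m..<n}. x ^ a * y ^ (n - a)) = x ^ n * y - x ^ m * y ^ (n - m + 1)"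
  using assms
proof (induction n rule: dec_induct)
  case (step n)
  let ?S = "\<Sum>a\<in>{m..<n}. x ^ a * y ^ (n - a)"
  have "(\<Sum>a\<in>{m..<Suc n}. x ^ a * y ^ (Suc n - a)) = y * ?S + x ^ n * y"
    using step.hyps by (simp add: sum_distrib_left Suc_diff_le mult_ac)
  then have "(x - y) * (\<Sum>a\<in>{m..<Suc n}. x ^ a * y ^ (Suc n - a)) = y * ((x - y) * ?S) + (x - y) * x ^ n * y"
    by (simp add: algebra_simps)
  also have "\<dots> = y * (x ^ n * y - x ^ m * y ^ (n - m + 1)) + (x - y) * x ^ n * y"
    using step.IH by simp
  also have "\<dots> = x ^ Suc n * y - x ^ m * y ^ (Suc n - m + 1)"
    using step.hyps by (simp add: algebra_simps Suc_diff_le)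
  finally show ?case .
qed simp

lemma sum_power_mult_power:
  fixes x y :: "'a::field"
  assumes "x \<noteq> y" and "m \<le> n"
  shows "(\<Sum>a\<in>{m..<n}. x ^ a * y ^ (n - a)) = (x ^ n * y - x ^ m * y ^ (n - m + 1)) / (x - y)"
  using sum_power_mult_power_diff[OF assms(2), of x y] assms(1)
  by (metis nonzero_mult_div_cancel_left right_minus_eq)

text \<open>The sum is \<open>x\<^sup>2 y z h\<^sub>n\<^sub>-\<^sub>1(x, y, z)\<close> with \<open>h\<close> the complete homogeneous symmetric polynomial,
  whose partial fraction expansion in the three variables is used here.\<close>

lemma sum_weight_indices_powers:
  fixes x y z :: "'a::field"
  assumes "x \<noteq> y" and "x \<noteq> z" and "y \<noteq> z"
  shows "(\<Sum>(a, b, c)\<in>weight_indices (n + 3). x ^ a * y ^ b * z ^ c)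
       = x\<^sup>2 * y * z * (x ^ (n + 1) / ((x - y) * (x - z)) + y ^ (n + 1) / ((y - x) * (y - z))
                        + z ^ (n + 1) / ((z - x) * (z - y)))"
proof -
  define w where "w = n + 3"
  have inner: "(\<Sum>b\<in>{1..<N}. y ^ b * z ^ (N - b)) = (y ^ N * z - y * z ^ N) / (y - z)"
    if "N \<ge> 1" for N
    using sum_power_mult_power[of y z 1 N] that assms by simp
  have outer: "(\<Sum>a\<in>{2..<w}. x ^ a * t ^ (w - a)) = (x ^ w * t - x\<^sup>2 * t ^ (w - 1)) / (x - t)"
    if "x \<noteq> t" for t
    using sum_power_mult_power[of x t 2 w] that by (simp add: w_def)
  have "(\<Sum>(a, b, c)\<in>weight_indices w. x ^ a * y ^ b * z ^ c)
        = (\<Sum>a\<in>{2..<w}. x ^ a * (\<Sum>b\<in>{1..<w - a}. y ^ b * z ^ (w - a - b)))"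
    by (simp add: sum_weight_indices mult.assoc sum_distrib_left)
  also have "\<dots> = (\<Sum>a\<in>{2..<w}. x ^ a * ((y ^ (w - a) * z - y * z ^ (w - a)) / (y - z)))"
    by (intro sum.cong refl) (subst inner, auto)
  also have "\<dots> = (z * (\<Sum>a\<in>{2..<w}. x ^ a * y ^ (w - a)) - y * (\<Sum>a\<in>{2..<w}. x ^ a * z ^ (w - a))) / (y - z)"
  proof -
    have "x ^ a * ((y ^ (w - a) * z - y * z ^ (w - a)) / (y - z))
          = (z * (x ^ a * y ^ (w - a)) - y * (x ^ a * z ^ (w - a))) / (y - z)" for a
      by (simp add: algebra_simps)
    then show ?thesis
      by (simp only: sum_divide_distrib[symmetric] sum_subtractf sum_distrib_left)
  qed
  also have "\<dots> = (z * ((x ^ w * y - x\<^sup>2 * y ^ (w - 1)) / (x - y))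
                    - y * ((x ^ w * z - x\<^sup>2 * z ^ (w - 1)) / (x - z))) / (y - z)"
    using assms by (simp add: outer)
  also have "\<dots> = x\<^sup>2 * y * z * (x ^ (n + 1) / ((x - y) * (x - z)) + y ^ (n + 1) / ((y - x) * (y - z))
                        + z ^ (n + 1) / ((z - x) * (z - y)))"
  proof -
    have "x ^ w = x\<^sup>2 * x ^ (n + 1)" "y ^ (w - 1) = y * y ^ (n + 1)" "z ^ (w - 1) = z * z ^ (n + 1)"
      by (simp_all add: w_def power_add power2_eq_square power3_eq_cube)
    moreover have "x - y \<noteq> 0" "x - z \<noteq> 0" "y - z \<noteq> 0" "y - x \<noteq> 0" "z - x \<noteq> 0" "z - y \<noteq> 0"
      using assms by auto
    ultimately show ?thesis
      by (simp add: divide_simps) (simp add: algebra_simps)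
  qed
  finally show ?thesis unfolding w_def .
qed

lemma sum_T3_term_weight_indices:
  assumes "u \<ge> 2" and "(i, j, k) \<in> oeo_triples"
  shows "(\<Sum>abc\<in>weight_indices (u + 2). T3_term abc (i, j, k))
         = pf_top u (i, j, k) - pf_mid u (i, j, k) + pf_low u (i, j, k)"
proof -
  define p where "p = odd_num i"
  define q where "q = even_num j"
  define r where "r = odd_num k"
  have pqr: "0 < r" "r < q" "q < p"
    using oeo_triples_less[OF assms(2)] by (simp_all add: p_def q_def r_def)
  define n where "n = u - 1"
  have u: "u + 2 = n + 3" "n + 1 = u" and "q ^ u = q * q ^ (u - 1)" "r ^ u = r * r ^ (u - 1)"
    using assms(1) by (simp_all add: n_def power_eq_if[of _ u])
  have top: "(1/p)\<^sup>2 * (1/q) * (1/r) * ((1/p) ^ u / ((1/p - 1/q) * (1/p - 1/r)))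
             = 1 / (p ^ u * (p - q) * (p - r))"
    using pqr by (simp add: divide_simps power_one_over) (simp add: algebra_simps power2_eq_square)
  have mid: "(1/p)\<^sup>2 * (1/q) * (1/r) * ((1/q) ^ u / ((1/q - 1/p) * (1/q - 1/r)))
             = - (1 / (q ^ (u - 1) * p * (p - q) * (q - r)))"
    using pqr \<open>q ^ u = q * q ^ (u - 1)\<close>
    by (simp add: divide_simps power_one_over) (simp add: algebra_simps power2_eq_square)
  have low: "(1/p)\<^sup>2 * (1/q) * (1/r) * ((1/r) ^ u / ((1/r - 1/p) * (1/r - 1/q)))
             = 1 / (r ^ (u - 1) * p * (p - r) * (q - r))"
    using pqr \<open>r ^ u = r * r ^ (u - 1)\<close>
    by (simp add: divide_simps power_one_over) (simp add: algebra_simps power2_eq_square)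
  have "T3_term (a, b, c) (i, j, k) = (1/p) ^ a * (1/q) ^ b * (1/r) ^ c" for a b c
    by (simp add: T3_term_def p_def q_def r_def power_one_over)
  then have "(\<Sum>abc\<in>weight_indices (u + 2). T3_term abc (i, j, k))
        = (\<Sum>(a, b, c)\<in>weight_indices (n + 3). (1/p) ^ a * (1/q) ^ b * (1/r) ^ c)"
    unfolding u(1) by (intro sum.cong refl) auto
  also have "\<dots> = (1/p)\<^sup>2 * (1/q) * (1/r) * ((1/p) ^ (n + 1) / ((1/p - 1/q) * (1/p - 1/r))
            + (1/q) ^ (n + 1) / ((1/q - 1/p) * (1/q - 1/r)) + (1/r) ^ (n + 1) / ((1/r - 1/p) * (1/r - 1/q)))"
    using pqr by (intro sum_weight_indices_powers) auto
  finally show ?thesis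
    unfolding u(2)
    by (simp only: distrib_left top mid low) (simp add: pf_top_def pf_mid_def pf_low_def p_def q_def r_def)
qed

lemma sum_infsum_T3_term_weight_indices:
  assumes "u \<ge> 2"
  shows "(\<Sum>abc\<in>weight_indices (u + 2). \<Sum>\<^sub>\<infinity>x\<in>oeo_triples. T3_term abc x)
         = pi\<^sup>2 / 24 * (\<Sum>\<^sub>\<infinity>k. 1 / odd_num k ^ u) + 2 * (\<Sum>\<^sub>\<infinity>i. harm_even_odd i / odd_num i ^ u)
           - (\<Sum>\<^sub>\<infinity>j. odd_harm j ^ 2 / even_num j ^ u)"
    (is "_ = pi\<^sup>2 / 24 * ?Z + 2 * ?V - ?M")
proof -
  let ?G = "\<lambda>x. \<Sum>abc\<in>weight_indices (u + 2). T3_term abc x"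
  have "((\<lambda>x. pf_top u x - pf_mid u x + pf_low u x) has_sum (?V - ?M + (pi\<^sup>2 / 24 * ?Z + ?V))) oeo_triples"
    using assms by (intro has_sum_add has_sum_diff has_sum_pf_top has_sum_pf_mid has_sum_pf_low)
  then have G0: "(?G has_sum (?V - ?M + (pi\<^sup>2 / 24 * ?Z + ?V))) oeo_triples"
  proof (rule has_sum_cong[THEN iffD2, rotated])
    show "?G x = pf_top u x - pf_mid u x + pf_low u x" if "x \<in> oeo_triples" for x
      using assms that sum_T3_term_weight_indices by (cases x) simp
  qed
  have "?V - ?M + (pi\<^sup>2 / 24 * ?Z + ?V) = pi\<^sup>2 / 24 * ?Z + 2 * ?V - ?M"
    by simp
  with G0 have G: "(?G has_sum (pi\<^sup>2 / 24 * ?Z + 2 * ?V - ?M)) oeo_triples"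
    by (simp only:)
  have "T3_term abc summable_on oeo_triples" if "abc \<in> weight_indices (u + 2)" for abc
  proof (rule summable_on_comparison_test)
    show "?G summable_on oeo_triples" using G by (rule has_sum_imp_summable)
    show "T3_term abc x \<le> ?G x" for x
      by (rule member_le_sum[OF that]) (simp_all add: T3_term_nonneg finite_weight_indices)
  qed (rule T3_term_nonneg)
  then have "(?G has_sum (\<Sum>abc\<in>weight_indices (u + 2). \<Sum>\<^sub>\<infinity>x\<in>oeo_triples. T3_term abc x)) oeo_triples"
    by (intro has_sum_sum finite_weight_indices has_sum_infsum)
  from this G show ?thesis by (rule has_sum_unique)
qed

section \<open>The square of the odd harmonic numbers\<close>

text \<open>Even-odd-odd triples \<open>m\<^sub>1 > m\<^sub>2 > m\<^sub>3 > 0\<close>, parametrised as \<open>(2j, 2k + 1, 2k' + 1)\<close>.\<close>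

definition eoo_triples :: "(nat \<times> nat \<times> nat) set" where
  "eoo_triples = {(j, k, k'). k' < k \<and> k < j}"

definition odd_harm_pairs :: "nat \<Rightarrow> real" where
  "odd_harm_pairs j = (\<Sum>k<j. \<Sum>k'<k. 1 / (odd_num k * odd_num k'))"

definition odd_harm_squares :: "nat \<Rightarrow> real" where
  "odd_harm_squares j = (\<Sum>k<j. 1 / odd_num k ^ 2)"

lemma odd_harm_pairs_nonneg: "0 \<le> odd_harm_pairs j"
  by (simp add: odd_harm_pairs_def sum_nonneg)

lemma odd_harm_squares_nonneg: "0 \<le> odd_harm_squares j"
  by (simp add: odd_harm_squares_def sum_nonneg)

lemma odd_harm_sq: "odd_harm j ^ 2 = 2 * odd_harm_pairs j + odd_harm_squares j"
proof (induction j)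
  case (Suc j)
  have "(\<Sum>k'<j. 1 / (odd_num j * odd_num k')) = odd_harm j / odd_num j"
    by (simp add: odd_harm_def sum_divide_distrib mult.commute)
  with Suc show ?case
    unfolding odd_harm_Suc power2_sum
    by (simp add: odd_harm_pairs_def odd_harm_squares_def power_divide field_simps)
qed (simp add: odd_harm_pairs_def odd_harm_squares_def)

lemma summable_on_odd_harm_sq_minorant:
  assumes "u \<ge> 2" and "\<And>j. 0 \<le> F j" and "\<And>j. F j \<le> odd_harm j ^ 2"
  shows "(\<lambda>j. F j / even_num j ^ u) summable_on UNIV"
  by (rule summable_on_comparison_test[OF summable_on_odd_harm_sq[OF assms(1)]])
     (use assms(2,3) in \<open>auto intro: divide_right_mono\<close>)

lemma has_sum_eoo_triples:
  assumes "u \<ge> 2"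
  shows "((\<lambda>(j, k, k'). 1 / (even_num j ^ u * odd_num k * odd_num k')) has_sum
           (\<Sum>\<^sub>\<infinity>j. odd_harm_pairs j / even_num j ^ u)) eoo_triples"
proof -
  let ?f = "\<lambda>(j, k, k'). 1 / (even_num j ^ u * odd_num k * odd_num k')"
  have eoo: "eoo_triples = Sigma UNIV (\<lambda>j. Sigma {..<j} (\<lambda>k. {..<k}))"
    by (auto simp: eoo_triples_def)
  show ?thesis
    unfolding eoo
  proof (rule has_sum_Sigma_nonneg[OF _ has_sum_infsum])
    show "((\<lambda>y. ?f (j, y)) has_sum (odd_harm_pairs j / even_num j ^ u)) (Sigma {..<j} (\<lambda>k. {..<k}))" for j
    proof (rule has_sum_finiteI)
      have "(\<Sum>y\<in>Sigma {..<j} (\<lambda>k. {..<k}). ?f (j, y)) = (\<Sum>k<j. \<Sum>k'<k. ?f (j, k, k'))"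
        by (subst sum.Sigma) auto
      then show "odd_harm_pairs j / even_num j ^ u = (\<Sum>y\<in>Sigma {..<j} (\<lambda>k. {..<k}). ?f (j, y))"
        by (simp add: odd_harm_pairs_def sum_divide_distrib mult_ac)
    qed auto
    show "(\<lambda>j. odd_harm_pairs j / even_num j ^ u) summable_on UNIV"
      using assms odd_harm_pairs_nonneg odd_harm_squares_nonneg
      by (intro summable_on_odd_harm_sq_minorant) (auto simp: odd_harm_sq)
  qed auto
qed

lemma has_sum_even_odd_sq_pairs:
  assumes "u \<ge> 2"
  shows "((\<lambda>(j, k). 1 / (even_num j ^ u * odd_num k ^ 2)) has_sum
           (\<Sum>\<^sub>\<infinity>j. odd_harm_squares j / even_num j ^ u)) {(j, k). k < j}"
proof -
  let ?f = "\<lambda>(j, k). 1 / (even_num j ^ u * odd_num k ^ 2)"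
  have pairs: "{(j, k). k < j} = Sigma UNIV (\<lambda>j. {..<j})"
    by auto
  show ?thesis
    unfolding pairs
  proof (rule has_sum_Sigma_nonneg[OF _ has_sum_infsum])
    show "((\<lambda>k. ?f (j, k)) has_sum (odd_harm_squares j / even_num j ^ u)) {..<j}" for j
      by (rule has_sum_finiteI) (simp_all add: odd_harm_squares_def sum_divide_distrib mult_ac)
    show "(\<lambda>j. odd_harm_squares j / even_num j ^ u) summable_on UNIV"
      using assms odd_harm_pairs_nonneg odd_harm_squares_nonneg
      by (intro summable_on_odd_harm_sq_minorant) (auto simp: odd_harm_sq)
  qed auto
qed

lemma infsum_odd_harm_sq_split:
  assumes "u \<ge> 2"
  shows "(\<Sum>\<^sub>\<infinity>j. odd_harm j ^ 2 / even_num j ^ u)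
         = 2 * infsum (\<lambda>(j, k, k'). 1 / (even_num j ^ u * odd_num k * odd_num k')) eoo_triples
           + infsum (\<lambda>(j, k). 1 / (even_num j ^ u * odd_num k ^ 2)) {(j, k). k < j}"
proof -
  have "((\<lambda>j. 2 * (odd_harm_pairs j / even_num j ^ u) + odd_harm_squares j / even_num j ^ u) has_sum
          (2 * (\<Sum>\<^sub>\<infinity>j. odd_harm_pairs j / even_num j ^ u) + (\<Sum>\<^sub>\<infinity>j. odd_harm_squares j / even_num j ^ u))) UNIV"
    using assms odd_harm_pairs_nonneg odd_harm_squares_nonneg
    by (intro has_sum_add has_sum_cmult_right has_sum_infsum summable_on_odd_harm_sq_minorant)
       (auto simp: odd_harm_sq)
  then show ?thesis
    by (simp add: infsumI[OF has_sum_eoo_triples[OF assms]] infsumI[OF has_sum_even_odd_sq_pairs[OF assms]]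
                  odd_harm_sq add_divide_distrib infsumI)
qed

section \<open>T-values and Euler sums as sums over index tuples\<close>

lemma infsum_lists_length1:
  "infsum f {m. length m = 1 \<and> P m} = infsum (\<lambda>a. f [a]) {a. P [a]}"
  by (rule infsum_reindex_bij_witness[of _ "\<lambda>a. [a]" "\<lambda>m. m ! 0"])
     (auto simp: length_Suc_conv)

lemma infsum_lists_length2:
  "infsum f {m. length m = 2 \<and> P m} = infsum (\<lambda>(a, b). f [a, b]) {(a, b). P [a, b]}"
  by (rule infsum_reindex_bij_witness[of _ "\<lambda>(a, b). [a, b]" "\<lambda>m. (m ! 0, m ! 1)"])
     (auto simp: numeral_2_eq_2 length_Suc_conv)

lemma infsum_lists_length3:
  "infsum f {m. length m = 3 \<and> P m} = infsum (\<lambda>(a, b, c). f [a, b, c]) {(a, b, c). P [a, b, c]}"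
  by (rule infsum_reindex_bij_witness[of _ "\<lambda>(a, b, c). [a, b, c]" "\<lambda>m. (m ! 0, m ! 1, m ! 2)"])
     (auto simp: numeral_3_eq_3 length_Suc_conv)

lemma infsum_odd_reindex:
  fixes f :: "nat \<Rightarrow> 'a::{topological_comm_monoid_add, t2_space}"
  shows "infsum f {A. odd A} = infsum (\<lambda>k. f (2 * k + 1)) UNIV"
  by (rule infsum_reindex_bij_witness[of _ "\<lambda>k. 2 * k + 1" "\<lambda>A. (A - 1) div 2"])
     (auto elim!: oddE)

lemma infsum_even_odd_reindex:
  fixes f :: "nat \<times> nat \<Rightarrow> 'a::{topological_comm_monoid_add, t2_space}"
  shows "infsum f {(A, B). B < A \<and> even A \<and> odd B} = infsum (\<lambda>(j, k). f (2 * j, 2 * k + 1)) {(j, k). k < j}"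
  by (rule infsum_reindex_bij_witness[of _ "\<lambda>(j, k). (2 * j, 2 * k + 1)" "\<lambda>(A, B). (A div 2, (B - 1) div 2)"])
     (auto simp: Suc_double_not_eq_double elim!: oddE evenE)

lemma infsum_odd_even_odd_reindex:
  fixes f :: "nat \<times> nat \<times> nat \<Rightarrow> 'a::{topological_comm_monoid_add, t2_space}"
  shows "infsum f {(A, B, C). C < B \<and> B < A \<and> 0 < C \<and> odd A \<and> even B \<and> odd C}
   = infsum (\<lambda>(i, j, k). f (2 * i + 1, 2 * j, 2 * k + 1)) oeo_triples"
  by (rule infsum_reindex_bij_witness[of _ "\<lambda>(i, j, k). (2 * i + 1, 2 * j, 2 * k + 1)"
        "\<lambda>(A, B, C). ((A - 1) div 2, B div 2, (C - 1) div 2)"])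
     (auto simp: oeo_triples_def Suc_double_not_eq_double elim!: oddE evenE)

lemma infsum_even_odd_odd_reindex:
  fixes f :: "nat \<times> nat \<times> nat \<Rightarrow> 'a::{topological_comm_monoid_add, t2_space}"
  shows "infsum f {(A, B, C). C < B \<and> B < A \<and> 0 < C \<and> even A \<and> odd B \<and> odd C}
   = infsum (\<lambda>(j, k, k'). f (2 * j, 2 * k + 1, 2 * k' + 1)) eoo_triples"
  by (rule infsum_reindex_bij_witness[of _ "\<lambda>(j, k, k'). (2 * j, 2 * k + 1, 2 * k' + 1)"
        "\<lambda>(A, B, C). (A div 2, (B - 1) div 2, (C - 1) div 2)"])
     (auto simp: eoo_triples_def Suc_double_not_eq_double elim!: oddE evenE)

lemma Tval_singleton: "Tval [s] = 2 * (\<Sum>\<^sub>\<infinity>k. 1 / odd_num k ^ s)"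
proof -
  have len: "length [s] = 1" by simp
  have "Tval [s] = infsum (\<lambda>m. 2 ^ 1 / (\<Prod>j<1. real (m ! j) ^ ([s] ! j)))
      {m. length m = 1 \<and> (sorted_wrt (>) m \<and> (\<forall>j<1. 0 < m ! j \<and> m ! j mod 2 = (1 - j) mod 2))}"
    unfolding Tval_def len by (rule refl)
  also have "\<dots> = infsum (\<lambda>A. 2 ^ 1 / (\<Prod>j<1. real ([A] ! j) ^ ([s] ! j)))
      {A. sorted_wrt (>) [A] \<and> (\<forall>j<1. 0 < [A] ! j \<and> [A] ! j mod 2 = (1 - j) mod 2)}"
    by (rule infsum_lists_length1)
  also have "\<dots> = infsum (\<lambda>A. 2 / real A ^ s) {A. odd A}"
    by (rule arg_cong2[where f = infsum]) (auto simp: odd_iff_mod_2_eq_one intro: odd_pos)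
  also have "\<dots> = 2 * (\<Sum>\<^sub>\<infinity>k. 1 / odd_num k ^ s)"
    by (subst infsum_odd_reindex) (simp add: odd_num_def add.commute flip: infsum_cmult_right')
  finally show ?thesis .
qed

lemma Tval_pair: "Tval [s, t] = 4 * infsum (\<lambda>(j, k). 1 / (even_num j ^ s * odd_num k ^ t)) {(j, k). k < j}"
proof -
  have len: "length [s, t] = 2" by simp
  have "Tval [s, t] = infsum (\<lambda>m. 2 ^ 2 / (\<Prod>j<2. real (m ! j) ^ ([s, t] ! j)))
      {m. length m = 2 \<and> (sorted_wrt (>) m \<and> (\<forall>j<2. 0 < m ! j \<and> m ! j mod 2 = (2 - j) mod 2))}"
    unfolding Tval_def len by (rule refl)
  also have "\<dots> = infsum (\<lambda>(A, B). 2 ^ 2 / (\<Prod>j<2. real ([A, B] ! j) ^ ([s, t] ! j)))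
      {(A, B). sorted_wrt (>) [A, B] \<and> (\<forall>j<2. 0 < [A, B] ! j \<and> [A, B] ! j mod 2 = (2 - j) mod 2)}"
    by (rule infsum_lists_length2)
  also have "\<dots> = infsum (\<lambda>(A, B). 4 / (real A ^ s * real B ^ t)) {(A, B). B < A \<and> even A \<and> odd B}"
    by (rule arg_cong2[where f = infsum])
       (auto simp: less_2_cases_iff lessThan_nat_numeral odd_iff_mod_2_eq_one even_iff_mod_2_eq_zero
             intro: odd_pos)
  also have "\<dots> = 4 * infsum (\<lambda>(j, k). 1 / (even_num j ^ s * odd_num k ^ t)) {(j, k). k < j}"
    by (subst infsum_even_odd_reindex)
       (simp add: odd_num_def even_num_def add.commute case_prod_unfold flip: infsum_cmult_right')
  finally show ?thesis .
qed

lemma Tval_triple: "Tval [a, b, c] = 8 * infsum (T3_term (a, b, c)) oeo_triples"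
proof -
  have len: "length [a, b, c] = 3" by simp
  have "Tval [a, b, c] = infsum (\<lambda>m. 2 ^ 3 / (\<Prod>j<3. real (m ! j) ^ ([a, b, c] ! j)))
      {m. length m = 3 \<and> (sorted_wrt (>) m \<and> (\<forall>j<3. 0 < m ! j \<and> m ! j mod 2 = (3 - j) mod 2))}"
    unfolding Tval_def len by (rule refl)
  also have "\<dots> = infsum (\<lambda>(A, B, C). 2 ^ 3 / (\<Prod>j<3. real ([A, B, C] ! j) ^ ([a, b, c] ! j)))
      {(A, B, C). sorted_wrt (>) [A, B, C] \<and> (\<forall>j<3. 0 < [A, B, C] ! j \<and> [A, B, C] ! j mod 2 = (3 - j) mod 2)}"
    by (rule infsum_lists_length3)
  also have "\<dots> = infsum (\<lambda>(A, B, C). 8 / (real A ^ a * real B ^ b * real C ^ c))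
                     {(A, B, C). C < B \<and> B < A \<and> 0 < C \<and> odd A \<and> even B \<and> odd C}"
    by (rule arg_cong2[where f = infsum])
       (auto simp: numeral_3_eq_3 All_less_Suc odd_iff_mod_2_eq_one even_iff_mod_2_eq_zero intro: odd_pos)
  also have "\<dots> = 8 * infsum (T3_term (a, b, c)) oeo_triples"
    by (subst infsum_odd_even_odd_reindex)
       (simp add: odd_num_def even_num_def add.commute T3_term_def case_prod_unfold
             flip: infsum_cmult_right')
  finally show ?thesis .
qed

lemma sums_inverse_odd_squares: "(\<lambda>k. 1 / odd_num k ^ 2) sums (pi\<^sup>2 / 8)"
proof -
  have "(\<lambda>n. 1 / (real n + 1) ^ 2) sums (pi\<^sup>2 / 6)"
    using inverse_squares_sums by (simp add: add.commute)
  from sums_group[OF this, of 2]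
  have "(\<lambda>k. 1 / odd_num k ^ 2 + 1 / 4 * (1 / (real k + 1) ^ 2)) sums (pi\<^sup>2 / 6)"
    by (simp add: odd_num_def field_simps power2_eq_square)
  from sums_diff[OF this sums_mult[OF inverse_squares_sums[unfolded of_nat_Suc], of "1/4"]]
  show ?thesis by (simp add: add.commute)
qed

lemma Tval_two: "Tval [2] = pi\<^sup>2 / 4"
  using infsumI[OF sums_nonneg_imp_has_sum[OF sums_inverse_odd_squares]]
  by (simp add: Tval_singleton)

definition decreasing_triples :: "(nat \<times> nat \<times> nat) set" where
  "decreasing_triples = {(A, B, C). C < B \<and> B < A \<and> 0 < C}"

lemma esum_u11:
  "esum [u, 1, 1] [z0, z1, z2]
   = infsum (\<lambda>(A, B, C). z0 ^ A * z1 ^ B * z2 ^ C / (real A ^ u * real B * real C)) decreasing_triples"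
proof -
  have len: "length [u, 1, 1] = 3" by simp
  have "esum [u, 1, 1] [z0, z1, z2]
        = infsum (\<lambda>n. \<Prod>j<3. ([z0, z1, z2] ! j) ^ (n ! j) / real (n ! j) ^ ([u, 1, 1] ! j))
            {n. length n = 3 \<and> (sorted_wrt (>) n \<and> (\<forall>j<3. 0 < n ! j))}"
    unfolding esum_def len by (rule refl)
  also have "\<dots> = infsum (\<lambda>(A, B, C).
                \<Prod>j<3. ([z0, z1, z2] ! j) ^ ([A, B, C] ! j) / real ([A, B, C] ! j) ^ ([u, 1, 1] ! j))
            {(A, B, C). sorted_wrt (>) [A, B, C] \<and> (\<forall>j<3. 0 < [A, B, C] ! j)}"
    by (rule infsum_lists_length3)
  also have "\<dots> = infsum (\<lambda>(A, B, C). z0 ^ A * z1 ^ B * z2 ^ C / (real A ^ u * real B * real C))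
                     decreasing_triples"
    by (rule arg_cong2[where f = infsum]) (auto simp: decreasing_triples_def numeral_3_eq_3 All_less_Suc)
  finally show ?thesis .
qed

lemma sum_inverse_pairs_le_harm_sq:
  "(\<Sum>(B, C)\<in>{(B, C). C < B \<and> B < A \<and> 0 < C}. 1 / (real B * real C)) \<le> harm A ^ 2"
proof -
  have "(\<Sum>(B, C)\<in>{(B, C). C < B \<and> B < A \<and> 0 < C}. 1 / (real B * real C))
        \<le> (\<Sum>(B, C)\<in>{1..<A} \<times> {1..<A}. 1 / (real B * real C))"
    by (intro sum_mono2) auto
  also have "\<dots> = (\<Sum>B\<in>{1..<A}. 1 / real B) ^ 2"
    by (simp add: sum_product sum.cartesian_product power2_eq_square)
  also have "\<dots> \<le> harm A ^ 2"
  proof (rule power_mono)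
    show "(\<Sum>B\<in>{1..<A}. 1 / real B) \<le> harm A"
      unfolding harm_def inverse_eq_divide by (rule sum_mono2) auto
  qed (simp add: sum_nonneg)
  finally show ?thesis .
qed

lemma summable_on_decreasing_triples:
  assumes "u \<ge> 2"
  shows "(\<lambda>(A, B, C). 1 / (real A ^ u * real B * real C)) summable_on decreasing_triples"
proof -
  define I where "I A = {(B, C). C < B \<and> B < A \<and> 0 < C}" for A :: nat
  define g where "g A = (\<Sum>(B, C)\<in>I A. 1 / (real A ^ u * real B * real C))" for A
  have finite_I: "finite (I A)" for A
    by (rule finite_subset[of _ "{..A} \<times> {..A}"]) (auto simp: I_def)
  have "g A \<le> 4 * (1 + harm A ^ 2) / (real A + 1) ^ 2" for A
  proof (cases "A = 0")
    case False
    have "g A = (\<Sum>(B, C)\<in>I A. 1 / (real B * real C)) / real A ^ u"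
      by (simp add: g_def sum_divide_distrib case_prod_unfold mult_ac)
    also have "\<dots> \<le> harm A ^ 2 / real A ^ u"
      using sum_inverse_pairs_le_harm_sq[of A] unfolding I_def by (rule divide_right_mono) simp
    also have "\<dots> \<le> (1 + harm A ^ 2) / ((real A + 1) ^ 2 / 4)"
    proof (rule frac_le)
      have "(real A + 1) ^ 2 \<le> (2 * real A) ^ 2" using False by (intro power_mono) auto
      also have "\<dots> \<le> 4 * real A ^ u"
        using False assms by (simp add: power_mult_distrib power_increasing)
      finally show "(real A + 1) ^ 2 / 4 \<le> real A ^ u" by simp
    qed auto
    finally show ?thesis by (simp add: field_simps)
  qed (simp add: g_def I_def)
  then have "g summable_on UNIV"
    by (intro summable_on_harm_sq_bound[of g 4]) (auto simp: g_def intro!: sum_nonneg)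
  then have "(\<lambda>(A, B, C). 1 / (real A ^ u * real B * real C)) summable_on Sigma UNIV I"
    by (intro summable_on_SigmaI[where g = g]) (auto simp: g_def finite_I intro!: has_sum_finiteI)
  moreover have "Sigma UNIV I = decreasing_triples"
    by (auto simp: I_def decreasing_triples_def)
  ultimately show ?thesis by simp
qed

lemma summable_on_esum_u11:
  assumes "u \<ge> 2" and "\<bar>z0\<bar> = 1" and "\<bar>z1\<bar> = 1" and "\<bar>z2\<bar> = 1"
  shows "(\<lambda>(A, B, C). z0 ^ A * z1 ^ B * z2 ^ C / (real A ^ u * real B * real C))
           summable_on decreasing_triples"
  by (rule abs_summable_summable,
      rule summable_on_comparison_test[OF summable_on_decreasing_triples[OF assms(1)]])
     (auto simp: abs_mult power_abs assms case_prod_unfold)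

text \<open>With \<open>\<alpha> = (-1)\<^sup>A\<close>, \<open>\<beta> = (-1)\<^sup>B\<close>, \<open>\<gamma> = (-1)\<^sup>C\<close> the left-hand side factors as \<open>(\<beta> - \<alpha>)(1 - \<gamma>)\<close>.\<close>

lemma alternating_signs_combination:
  "(-1::real) ^ B - (-1) ^ A + (-1) ^ A * (-1) ^ C - (-1) ^ B * (-1) ^ C
   = (if odd A \<and> even B \<and> odd C then 4 else 0) - (if even A \<and> odd B \<and> odd C then 4 else 0)"
  by (cases "even A"; cases "even B"; cases "even C") simp_all

lemma esum_alternating_combination_parity:
  assumes "u \<ge> 2"
  shows "esum [u, 1, 1] [1, -1, 1] - esum [u, 1, 1] [-1, 1, 1]
           + esum [u, 1, 1] [-1, 1, -1] - esum [u, 1, 1] [1, -1, -1]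
         = 4 * infsum (\<lambda>(A, B, C). 1 / (real A ^ u * real B * real C))
                 {(A, B, C). C < B \<and> B < A \<and> 0 < C \<and> odd A \<and> even B \<and> odd C}
           - 4 * infsum (\<lambda>(A, B, C). 1 / (real A ^ u * real B * real C))
                 {(A, B, C). C < B \<and> B < A \<and> 0 < C \<and> even A \<and> odd B \<and> odd C}"
proof -
  define \<tau> where "\<tau> = (\<lambda>(A, B, C). 1 / (real A ^ u * real B * real C))"
  define e where "e z0 z1 z2 = (\<lambda>(A, B, C). z0 ^ A * z1 ^ B * z2 ^ C / (real A ^ u * real B * real C))"
    for z0 z1 z2 :: real
  define P where "P = (\<lambda>(A, B, C). if odd A \<and> even B \<and> odd C then \<tau> (A, B, C) else 0)"
  define Q where "Q = (\<lambda>(A, B, C). if even A \<and> odd B \<and> odd C then \<tau> (A, B, C) else 0)"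
  have PQ: "P summable_on decreasing_triples" "Q summable_on decreasing_triples"
    by (rule summable_on_comparison_test[OF summable_on_decreasing_triples[OF assms]];
        auto simp: P_def Q_def \<tau>_def case_prod_unfold)+
  have "((\<lambda>x. e 1 (-1) 1 x - e (-1) 1 1 x + e (-1) 1 (-1) x - e 1 (-1) (-1) x) has_sum
          (infsum (e 1 (-1) 1) decreasing_triples - infsum (e (-1) 1 1) decreasing_triples
           + infsum (e (-1) 1 (-1)) decreasing_triples - infsum (e 1 (-1) (-1)) decreasing_triples))
          decreasing_triples"
    unfolding e_def using assms
    by (intro has_sum_diff has_sum_add has_sum_infsum summable_on_esum_u11) simp_all
  moreover have "e 1 (-1) 1 x - e (-1) 1 1 x + e (-1) 1 (-1) x - e 1 (-1) (-1) x = 4 * P x - 4 * Q x" for x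
    using alternating_signs_combination
    by (auto simp: e_def P_def Q_def \<tau>_def case_prod_unfold algebra_simps
             simp flip: add_divide_distrib diff_divide_distrib)
  moreover have "((\<lambda>x. 4 * P x - 4 * Q x) has_sum
                   (4 * infsum P decreasing_triples - 4 * infsum Q decreasing_triples)) decreasing_triples"
    by (intro has_sum_diff has_sum_cmult_right has_sum_infsum PQ)
  ultimately have "infsum (e 1 (-1) 1) decreasing_triples - infsum (e (-1) 1 1) decreasing_triples
     + infsum (e (-1) 1 (-1)) decreasing_triples - infsum (e 1 (-1) (-1)) decreasing_triples
     = 4 * infsum P decreasing_triples - 4 * infsum Q decreasing_triples"
    by (simp add: has_sum_unique)
  moreover have "infsum P decreasing_triples
                 = infsum \<tau> {(A, B, C). C < B \<and> B < A \<and> 0 < C \<and> odd A \<and> even B \<and> odd C}"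
    by (rule infsum_cong_neutral) (auto simp: P_def decreasing_triples_def split: if_splits)
  moreover have "infsum Q decreasing_triples
                 = infsum \<tau> {(A, B, C). C < B \<and> B < A \<and> 0 < C \<and> even A \<and> odd B \<and> odd C}"
    by (rule infsum_cong_neutral) (auto simp: Q_def decreasing_triples_def split: if_splits)
  ultimately show ?thesis
    unfolding esum_u11 by (simp add: e_def \<tau>_def)
qed

lemma esum_alternating_combination:
  assumes "u \<ge> 2"
  shows "esum [u, 1, 1] [1, -1, 1] - esum [u, 1, 1] [-1, 1, 1]
           + esum [u, 1, 1] [-1, 1, -1] - esum [u, 1, 1] [1, -1, -1]
         = 4 * infsum (T3_term (u, 1, 1)) oeo_triples
           - 4 * infsum (\<lambda>(j, k, k'). 1 / (even_num j ^ u * odd_num k * odd_num k')) eoo_triples"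
  unfolding esum_alternating_combination_parity[OF assms]
  by (subst infsum_odd_even_odd_reindex, subst infsum_even_odd_odd_reindex)
     (simp add: T3_term_def odd_num_def even_num_def add.commute case_prod_unfold)

theorem theorem5p5:
  fixes w u :: nat
  assumes "w \<ge> 4" and "u = w - 2"
  shows "(\<Sum>(a, b, c) \<in> {(a, b, c). a + b + c = w \<and> a \<ge> 2 \<and> b \<ge> 1 \<and> c \<ge> 1}.
            Tval [a, b, c])
    = 2 / 3 * Tval [2] * Tval [u] - 2 * Tval [u, 2]
      + 4 * (esum [u, 1, 1] [1, -1, 1] - esum [u, 1, 1] [-1, 1, 1]
             + esum [u, 1, 1] [-1, 1, -1] - esum [u, 1, 1] [1, -1, -1])"
proof -
  have u: "u \<ge> 2" and w: "w = u + 2" using assms by auto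
  define Z where "Z = (\<Sum>\<^sub>\<infinity>k. 1 / odd_num k ^ u)"
  define V where "V = infsum (T3_term (u, 1, 1)) oeo_triples"
  define E where "E = infsum (\<lambda>(j, k, k'). 1 / (even_num j ^ u * odd_num k * odd_num k')) eoo_triples"
  define F where "F = infsum (\<lambda>(j, k). 1 / (even_num j ^ u * odd_num k ^ 2)) {(j, k). k < j}"
  have V: "(\<Sum>\<^sub>\<infinity>i. harm_even_odd i / odd_num i ^ u) = V"
    unfolding V_def by (rule infsumI[OF has_sum_T3_term_u11[OF u], symmetric])
  have "(\<Sum>(a, b, c) \<in> {(a, b, c). a + b + c = w \<and> a \<ge> 2 \<and> b \<ge> 1 \<and> c \<ge> 1}. Tval [a, b, c])
        = 8 * (\<Sum>abc\<in>weight_indices (u + 2). infsum (T3_term abc) oeo_triples)"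
    unfolding w weight_indices_def[symmetric] by (simp add: Tval_triple sum_distrib_left case_prod_unfold)
  also have "\<dots> = 8 * (pi\<^sup>2 / 24 * Z + 2 * V - (2 * E + F))"
    using sum_infsum_T3_term_weight_indices[OF u] infsum_odd_harm_sq_split[OF u] V
    by (simp add: Z_def E_def F_def)
  also have "\<dots> = 2 / 3 * Tval [2] * Tval [u] - 2 * Tval [u, 2]
      + 4 * (esum [u, 1, 1] [1, -1, 1] - esum [u, 1, 1] [-1, 1, 1]
             + esum [u, 1, 1] [-1, 1, -1] - esum [u, 1, 1] [1, -1, -1])"
    unfolding esum_alternating_combination[OF u] Tval_two
    unfolding Tval_singleton Tval_pair
    by (simp add: Z_def V_def E_def F_def algebra_simps)
  finally show ?thesis .
qed

end
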